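(* Let $P_0,P_1,P_2\in\mathbb H$ be distinct and suppose that $P_0P_1P_2$ is not equilateral (i.e. not $\langle P_0,P_1\rangle=\langle P_1,P_2\rangle=\langle P_2,P_0\rangle$). Let $\varepsilon\in\{-1,1\}$ and for $i\in\mathbb Z/3\mathbb Z$ let $$R_i:=\frac{\sqrt{1-2\langle P_{i+1},P_{i+2}\rangle}(P_{i+1}+P_{i+2})+\varepsilon P_{i+1}\tilde\times P_{i+2}}{\sqrt3(1-\langle P_{i+1},P_{i+2}\rangle)}.$$ Let $\alpha:=-1+\langle P_0,P_1\rangle+\langle P_1,P_2\rangle+\langle P_2,P_0\rangle$, $\chi:=\langle P_0\tilde\times P_1,P_2\rangle$ and $d_i:=\sqrt{1-2\langle P_{i+1},P_{i+2}\rangle}$. Then $R_0R_1R_2$ is equilateral (i.e. $\langle R_0,R_1\rangle=\langle R_1,R_2\rangle=\langle R_2,R_0\rangle$) if and only if $$\alpha(d_0+d_1+d_2-d_0d_1d_2)+\varepsilon\chi(1-d_0d_1-d_1d_2-d_2d_0)=0.$$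
   Context: $\langle v,w\rangle=-v_1w_1+v_2w_2+v_3w_3$ on $\mathbb R^3$; $\mathbb H=\{P\in\mathbb R^3:\langle P,P\rangle=-1,\ P_1\ge1\}$; $v\tilde\times w:=J(v\times w)$ with $J=\mathrm{diag}(-1,1,1)$ and $\times$ the Euclidean cross product. Indices are in $\mathbb Z/3\mathbb Z$. *)

theory Defs
  imports "HOL-Analysis.Analysis" "HOL-Analysis.Cross3"
begin

unbundle cross3_syntax

text \<open>Vectors in R^3 are real^3 with components x$1, x$2, x$3.
  Indices Z/3Z are modelled by the numeral type 3 (arithmetic mod 3).\<close>

definition lor :: "real^3 \<Rightarrow> real^3 \<Rightarrow> real" where
  "lor v w = - (v$1 * w$1) + v$2 * w$2 + v$3 * w$3"

definition Jmap :: "real^3 \<Rightarrow> real^3" where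
  "Jmap v = vector [- (v$1), v$2, v$3]"

definition lcross :: "real^3 \<Rightarrow> real^3 \<Rightarrow> real^3" where
  "lcross v w = Jmap (v \<times> w)"

definition hyperboloid :: "(real^3) set" where
  "hyperboloid = {P. lor P P = -1 \<and> P$1 \<ge> 1}"

definition equilateral3 :: "(3 \<Rightarrow> real^3) \<Rightarrow> bool" where
  "equilateral3 Q \<longleftrightarrow> lor (Q 0) (Q 1) = lor (Q 1) (Q 2) \<and> lor (Q 1) (Q 2) = lor (Q 2) (Q 0)"

end

theory Submission
  imports Defs
begin

text \<open>The point \<open>R i\<close> is the centre of the equilateral triangle erected on the side
  \<open>P (i+1) P (i+2)\<close> (on the side selected by \<open>\<epsilon>\<close>), so this is a hyperbolic Napoleon theorem.
  Put \<open>a i = \<langle>P (i+1), P (i+2)\<rangle> \<le> -1\<close>, so that \<open>a i = (1 - d i\<^sup>2) / 2\<close>. Expanding with the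
  Lorentzian Binet--Cauchy identity gives \<open>\<langle>R i, R (i+1)\<rangle> = N i / (3 (1 - a i) (1 - a (i+1)))\<close>
  with \<open>N i\<close> polynomial in the \<open>a j\<close>, \<open>d j\<close> and \<open>\<epsilon>\<chi>\<close>. After clearing denominators, the
  difference of two consecutive Gram entries factors as \<open>(d i - d (i+2)) / 2\<close> times the
  expression of the theorem. Since \<open>P\<close> is not equilateral the \<open>d i\<close> are not all equal, so the
  Gram entries of \<open>R\<close> agree exactly when that expression vanishes.\<close>

lemma lor_commute: "lor u v = lor v u"
  unfolding lor_def by simp

lemma lor_add_left: "lor (u + v) w = lor u w + lor v w"
  unfolding lor_def by (simp add: algebra_simps)

lemma lor_add_right: "lor w (u + v) = lor w u + lor w v"
  unfolding lor_def by (simp add: algebra_simps)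

lemma lor_scaleR_left: "lor (c *\<^sub>R u) w = c * lor u w"
  unfolding lor_def by (simp add: algebra_simps)

lemma lor_scaleR_right: "lor w (c *\<^sub>R u) = c * lor w u"
  unfolding lor_def by (simp add: algebra_simps)

lemma lor_lcross_eq_triple: "lor (lcross u v) w = (u \<times> v) \<bullet> w"
  unfolding lor_def lcross_def Jmap_def inner_vec_def sum_3 by simp

lemma lor_lcross_cycle: "lor (lcross u v) w = lor (lcross v w) u"
  unfolding lor_lcross_eq_triple by (simp add: cross3_simps)

lemma lor_lcross_self_left: "lor (lcross u v) u = 0"
  unfolding lor_lcross_eq_triple by (simp add: cross3_simps)

lemma lor_lcross_self_right: "lor (lcross u v) v = 0"
  unfolding lor_lcross_eq_triple by (simp add: cross3_simps)

lemma lor_lcross_lcross: "lor (lcross u v) (lcross w z) = lor u z * lor v w - lor u w * lor v z"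
  unfolding lor_def lcross_def Jmap_def by (simp add: cross3_simps)

lemma lor_hyperboloid_le:
  assumes "P \<in> hyperboloid" "Q \<in> hyperboloid"
  shows "lor P Q \<le> -1"
proof -
  have P: "(P$1)\<^sup>2 = 1 + (P$2)\<^sup>2 + (P$3)\<^sup>2" "P$1 \<ge> 1"
    using assms(1) unfolding hyperboloid_def lor_def by (auto simp: power2_eq_square)
  have Q: "(Q$1)\<^sup>2 = 1 + (Q$2)\<^sup>2 + (Q$3)\<^sup>2" "Q$1 \<ge> 1"
    using assms(2) unfolding hyperboloid_def lor_def by (auto simp: power2_eq_square)
  define u where "u = P$2 * Q$2 + P$3 * Q$3"
  have "(P$1 * Q$1)\<^sup>2 = (1 + (P$2)\<^sup>2 + (P$3)\<^sup>2) * (1 + (Q$2)\<^sup>2 + (Q$3)\<^sup>2)"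
    using P(1) Q(1) by (simp add: power_mult_distrib)
  also have "\<dots> = (1 + u)\<^sup>2 + (P$2 - Q$2)\<^sup>2 + (P$3 - Q$3)\<^sup>2 + (P$2 * Q$3 - P$3 * Q$2)\<^sup>2"
    unfolding u_def by (simp add: power2_eq_square algebra_simps)
  finally have "(1 + u)\<^sup>2 \<le> (P$1 * Q$1)\<^sup>2"
    by simp
  moreover have "0 \<le> P$1 * Q$1"
    using P(2) Q(2) by simp
  ultimately have "1 + u \<le> P$1 * Q$1"
    by (rule power2_le_imp_le)
  then show ?thesis
    unfolding lor_def u_def by simp
qed

lemma lor_lcross_combination:
  assumes "lor Y Y = -1" "lor Z Z = -1" "e * e = 1"
  shows "lor (dA *\<^sub>R (Y + Z) + e *\<^sub>R lcross Y Z) (dB *\<^sub>R (Z + X) + e *\<^sub>R lcross Z X)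
    = dA * dB * (lor Y Z + lor Z X + lor X Y - 1) + e * lor (lcross X Y) Z * (dA + dB)
        - lor X Y - lor Y Z * lor Z X"
proof -
  have triple: "lor Y (lcross Z X) = lor (lcross X Y) Z" "lor (lcross Y Z) X = lor (lcross X Y) Z"
    by (metis lor_commute lor_lcross_cycle)+
  have orth: "lor Z (lcross Z X) = 0" "lor (lcross Y Z) Z = 0"
    by (metis lor_commute lor_lcross_self_left) (rule lor_lcross_self_right)
  show ?thesis
    unfolding lor_add_left lor_add_right lor_scaleR_left lor_scaleR_right triple orth
      lor_lcross_lcross
    using assms lor_commute[of Y X] lor_commute[of Z Y] lor_commute[of X Z] lor_commute[of Z X]
    by algebra
qed

definition napoleon_centre :: "real \<Rightarrow> real^3 \<Rightarrow> real^3 \<Rightarrow> real^3" where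
  "napoleon_centre \<epsilon> Y Z = (1 / (sqrt 3 * (1 - lor Y Z))) *\<^sub>R
     (sqrt (1 - 2 * lor Y Z) *\<^sub>R (Y + Z) + \<epsilon> *\<^sub>R lcross Y Z)"

definition napoleon_numerator :: "real \<Rightarrow> real \<Rightarrow> real \<Rightarrow> real \<Rightarrow> real" where
  "napoleon_numerator a b c t =
     sqrt (1 - 2 * a) * sqrt (1 - 2 * b) * (a + b + c - 1)
       + t * (sqrt (1 - 2 * a) + sqrt (1 - 2 * b)) - c - a * b"

lemma lor_napoleon_centre:
  assumes "lor Y Y = -1" "lor Z Z = -1" "\<epsilon> * \<epsilon> = 1"
  shows "lor (napoleon_centre \<epsilon> Y Z) (napoleon_centre \<epsilon> Z X)
    = napoleon_numerator (lor Y Z) (lor Z X) (lor X Y) (\<epsilon> * lor (lcross X Y) Z)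
        / (3 * (1 - lor Y Z) * (1 - lor Z X))"
proof -
  have scale: "1 / (sqrt 3 * p) * (1 / (sqrt 3 * q) * n) = n / (3 * p * q)" for p q n :: real
  proof -
    have "1 / (sqrt 3 * p) * (1 / (sqrt 3 * q) * n) = n / ((sqrt 3 * sqrt 3) * p * q)"
      by (simp add: algebra_simps)
    then show ?thesis
      by simp
  qed
  show ?thesis
    unfolding napoleon_centre_def lor_scaleR_left lor_scaleR_right scale
      lor_lcross_combination[OF assms] napoleon_numerator_def
    by (simp only: mult_ac)
qed

definition napoleon_discriminant :: "real \<Rightarrow> real \<Rightarrow> real \<Rightarrow> real \<Rightarrow> real" where
  "napoleon_discriminant a b c t =
     (let dA = sqrt (1 - 2 * a); dB = sqrt (1 - 2 * b); dC = sqrt (1 - 2 * c)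
      in (a + b + c - 1) * (dA + dB + dC - dA * dB * dC) + t * (1 - dA * dB - dB * dC - dC * dA))"

lemma napoleon_discriminant_rotate:
  "napoleon_discriminant a1 a2 a0 t = napoleon_discriminant a0 a1 a2 t"
  unfolding napoleon_discriminant_def Let_def by (simp add: algebra_simps)

lemma napoleon_numerator_difference:
  fixes a0 a1 a2 t :: real
  assumes "a0 \<le> 1/2" "a1 \<le> 1/2" "a2 \<le> 1/2"
  shows "(1 - a2) * napoleon_numerator a0 a1 a2 t - (1 - a0) * napoleon_numerator a1 a2 a0 t
    = (sqrt (1 - 2 * a0) - sqrt (1 - 2 * a2)) / 2 * napoleon_discriminant a0 a1 a2 t"
proof -
  define d0 d1 d2 where "d0 = sqrt (1 - 2 * a0)" and "d1 = sqrt (1 - 2 * a1)"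
    and "d2 = sqrt (1 - 2 * a2)"
  have a: "a0 = (1 - d0\<^sup>2) / 2" "a1 = (1 - d1\<^sup>2) / 2" "a2 = (1 - d2\<^sup>2) / 2"
    using assms unfolding d0_def d1_def d2_def by simp_all
  show ?thesis
    unfolding napoleon_numerator_def napoleon_discriminant_def Let_def
      d0_def[symmetric] d1_def[symmetric] d2_def[symmetric]
    unfolding a by (simp add: field_simps power2_eq_square)
qed

lemma napoleon_grams_equal_iff:
  fixes a0 a1 a2 t :: real
  assumes "a0 \<le> 1/2" "a1 \<le> 1/2" "a2 \<le> 1/2" and "\<not> (a0 = a1 \<and> a1 = a2)"
  defines "g \<equiv> \<lambda>a b c. napoleon_numerator a b c t / (3 * (1 - a) * (1 - b))"
  shows "g a0 a1 a2 = g a1 a2 a0 \<and> g a1 a2 a0 = g a2 a0 a1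
         \<longleftrightarrow> napoleon_discriminant a0 a1 a2 t = 0"
proof -
  let ?F = "napoleon_discriminant a0 a1 a2 t"
  have cross: "N / (3 * c0 * c1) = M / (3 * c1 * c2) \<longleftrightarrow> c2 * N - c0 * M = 0"
    if "c0 \<noteq> 0" "c1 \<noteq> 0" "c2 \<noteq> 0" for N M c0 c1 c2 :: real
    using that by (auto simp: field_simps)
  have nz: "1 - a0 \<noteq> 0" "1 - a1 \<noteq> 0" "1 - a2 \<noteq> 0"
    using assms(1-3) by auto
  have "g a0 a1 a2 = g a1 a2 a0 \<longleftrightarrow> (sqrt (1 - 2 * a0) - sqrt (1 - 2 * a2)) / 2 * ?F = 0"
    unfolding g_def cross[OF nz] napoleon_numerator_difference[OF assms(1-3)] ..
  moreover have "g a1 a2 a0 = g a2 a0 a1 \<longleftrightarrow> (sqrt (1 - 2 * a1) - sqrt (1 - 2 * a0)) / 2 * ?F = 0"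
    unfolding g_def cross[OF nz(2,3,1)] napoleon_numerator_difference[OF assms(2,3,1)]
      napoleon_discriminant_rotate[of a1 a2 a0] ..
  ultimately show ?thesis
    using assms(4) by auto
qed

theorem corollary4p2:
  fixes P :: "3 \<Rightarrow> real^3" and \<epsilon> :: real
  assumes "\<And>i. P i \<in> hyperboloid"
    and "inj P"
    and "\<not> equilateral3 P"
    and "\<epsilon> \<in> {-1, 1}"
  shows "let d = (\<lambda>i. sqrt (1 - 2 * lor (P (i+1)) (P (i+2))));
             R = (\<lambda>i. (1 / (sqrt 3 * (1 - lor (P (i+1)) (P (i+2))))) *\<^sub>R
                     (d i *\<^sub>R (P (i+1) + P (i+2)) + \<epsilon> *\<^sub>R lcross (P (i+1)) (P (i+2))));
             \<alpha> = -1 + lor (P 0) (P 1) + lor (P 1) (P 2) + lor (P 2) (P 0);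
             chi = lor (lcross (P 0) (P 1)) (P 2)
         in equilateral3 R \<longleftrightarrow>
            \<alpha> * (d 0 + d 1 + d 2 - d 0 * d 1 * d 2)
              + \<epsilon> * chi * (1 - d 0 * d 1 - d 1 * d 2 - d 2 * d 0) = 0"
proof -
  have hyp: "lor (P i) (P i) = -1" for i
    using assms(1) unfolding hyperboloid_def by auto
  have "\<epsilon> * \<epsilon> = 1"
    using assms(4) by auto
  note gram = lor_napoleon_centre[OF hyp hyp this]
  have le: "lor (P i) (P j) \<le> 1/2" for i j
    using lor_hyperboloid_le[OF assms(1) assms(1), of i j] by simp
  have chi: "lor (lcross (P 1) (P 2)) (P 0) = lor (lcross (P 0) (P 1)) (P 2)"
    "lor (lcross (P 2) (P 0)) (P 1) = lor (lcross (P 0) (P 1)) (P 2)"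
    by (metis lor_lcross_cycle)+
  have "\<not> (lor (P 1) (P 2) = lor (P 2) (P 0) \<and> lor (P 2) (P 0) = lor (P 0) (P 1))"
    using assms(3) unfolding equilateral3_def by auto
  note grams_equal = napoleon_grams_equal_iff[OF le le le this]
  have idx: "(0::3) + 1 = 1" "(0::3) + 2 = 2" "(1::3) + 1 = 2" "(1::3) + 2 = 0"
    "(2::3) + 1 = 0" "(2::3) + 2 = 1"
    by simp_all
  show ?thesis
    unfolding Let_def napoleon_centre_def[symmetric] equilateral3_def idx gram chi grams_equal
      napoleon_discriminant_def Let_def
    by (intro arg_cong[where f = "\<lambda>x. x = 0"]) algebra
qed

end
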